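(* Let $N\ge K\ge 1$ be integers and let $\mathcal{S}$ be the collection of all subsets $S\subseteq[N]$ with $1\le |S|\le K$. For every $S\in\mathcal{S}$ and all $v,v^\star\in[0,1]^N$, $$\frac{1}{2(K+1)^4}\sum_{i\in S}(v_i-v^\star_i)^2\;\le\;\|\mu(S,v)-\mu(S,v^\star)\|_2^2\;\le\;2\,\mathbb{E}_{i\sim\mu(S,v^\star)}\big[\ell_{\log}(\mu(S,v),i)-\ell_{\log}(\mu(S,v^\star),i)\big].$$
   Context: For $S\in\mathcal{S}$ and $v\in[0,1]^N$, $\mu(S,v)$ is the probability distribution on $\{0,1,\dots,N\}$ (viewed as a vector in $\mathbb{R}^{N+1}$) given by $\mu_i(S,v)=\frac{v_i}{1+\sum_{j\in S}v_j}$ for $i\in S$, $\mu_0(S,v)=\frac{1}{1+\sum_{j\in S}v_j}$, and $\mu_i(S,v)=0$ for $i\notin S\cup\{0\}$. For a distribution $\mu$ on $\{0,\dots,N\}$ and an outcome $i$, the log loss is $\ell_{\log}(\mu,i)=-\log\mu_i$. *)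

theory Defs
  imports "HOL-Analysis.Analysis" "HOL-Library.Extended_Real"
begin

text \<open>MNL choice distribution mu(S,v) on outcomes {0,...,N}; items are 1..N, 0 = no purchase.
 Vectors v in [0,1]^N are functions nat => real, only the values at 1..N matter.\<close>
definition mnl :: "nat set \<Rightarrow> (nat \<Rightarrow> real) \<Rightarrow> nat \<Rightarrow> real" where
  "mnl S v i = (if i = 0 then 1 / (1 + (\<Sum>j\<in>S. v j))
                else if i \<in> S then v i / (1 + (\<Sum>j\<in>S. v j)) else 0)"

definition logloss :: "(nat \<Rightarrow> real) \<Rightarrow> nat \<Rightarrow> ereal" where
  "logloss \<mu> i = (if \<mu> i > 0 then ereal (- ln (\<mu> i)) else \<infinity>)"

definition exp_logloss_regret :: "nat \<Rightarrow> nat set \<Rightarrow> (nat \<Rightarrow> real) \<Rightarrow> (nat \<Rightarrow> real) \<Rightarrow> ereal" where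
  "exp_logloss_regret N S v vs =
     (\<Sum>i\<in>{i\<in>{0..N}. mnl S vs i > 0}.
        ereal (mnl S vs i) * (logloss (mnl S v) i - logloss (mnl S vs) i))"

end

theory Submission
  imports Defs
begin

text \<open>The upper bound is the pointwise inequality
  \<open>(p - q)\<^sup>2 \<le> 2 (q ln (q/p) - q + p)\<close> for \<open>p, q \<in> (0,1]\<close>, summed over the support of
  \<open>q\<close>: the linear terms cancel because both distributions have mass 1, and mass of \<open>p\<close>
  off that support only helps since \<open>p\<^sup>2 \<le> 2p\<close>.
  For the lower bound, the MNL weights are the odds \<open>v\<^sub>i = \<mu>\<^sub>i / \<mu>\<^sub>0\<close>, and
  \<open>\<mu>\<^sub>0 \<ge> 1/(K+1)\<close>; writing \<open>p\<^sub>i q\<^sub>0 - q\<^sub>i p\<^sub>0 = q\<^sub>0 (p\<^sub>i - q\<^sub>i) + q\<^sub>i (q\<^sub>0 - p\<^sub>0)\<close>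
  bounds differences of odds by differences of probabilities.\<close>

lemma sq_diff_le_kl_summand:
  fixes p q :: real
  assumes "0 < p" "p \<le> 1" "0 < q" "q \<le> 1"
  shows "(p - q)\<^sup>2 \<le> 2 * (q * (ln q - ln p) - q + p)"
proof -
  define h where "h x = 2 * (q * (ln q - ln x) - q + x) - (x - q)\<^sup>2" for x :: real
  have h_deriv: "DERIV h x :> 2 * (x - q) * (1 - x) / x" if "0 < x" for x
  proof -
    have "DERIV h x :> 2 * (- q / x + 1) - 2 * (x - q)"
      unfolding h_def using that
      by (auto intro!: derivative_eq_intros simp: field_simps power2_eq_square)
    then show ?thesis
      using that by (simp add: field_simps)
  qed
  have "h q \<le> h p"
  proof (cases "p \<le> q")
    case True
    show ?thesis
    proof (rule DERIV_nonpos_imp_nonincreasing[OF True])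
      fix x assume x: "p \<le> x" "x \<le> q"
      then have "0 < x" "x - q \<le> 0" "0 \<le> 1 - x" using assms by auto
      then have "2 * (x - q) * (1 - x) / x \<le> 0"
        by (intro divide_nonpos_pos) (auto simp: mult_nonpos_nonneg)
      with h_deriv \<open>0 < x\<close> show "\<exists>y. DERIV h x :> y \<and> y \<le> 0" by blast
    qed
  next
    case False
    show ?thesis
    proof (rule DERIV_nonneg_imp_nondecreasing[of q p h])
      show "q \<le> p" using False by simp
      fix x assume x: "q \<le> x" "x \<le> p"
      then have "0 < x" "0 \<le> 2 * (x - q) * (1 - x) / x" using assms by auto
      with h_deriv show "\<exists>y. DERIV h x :> y \<and> y \<ge> 0" by blast
    qed
  qed
  then show ?thesis by (simp add: h_def)
qed

lemma prob_le_one: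
  fixes p :: "'a \<Rightarrow> real"
  assumes "finite A" "\<forall>j\<in>A. 0 \<le> p j" "sum p A = 1" "i \<in> A"
  shows "p i \<le> 1"
  using member_le_sum[of i A p] assms by auto

lemma sum_sq_diff_le_2_kl:
  fixes p q :: "'a \<Rightarrow> real"
  assumes A: "finite A"
    and p: "\<forall>i\<in>A. 0 \<le> p i" "sum p A = 1"
    and q: "\<forall>i\<in>A. 0 \<le> q i" "sum q A = 1"
    and abs_cont: "\<forall>i\<in>A. 0 < q i \<longrightarrow> 0 < p i"
  shows "(\<Sum>i\<in>A. (p i - q i)\<^sup>2) \<le> 2 * (\<Sum>i\<in>{i\<in>A. 0 < q i}. q i * (ln (q i) - ln (p i)))"
proof -
  define U where "U = {i\<in>A. 0 < q i}"
  have U: "U \<subseteq> A" "finite U" using A by (auto simp: U_def)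
  have q_off: "q i = 0" if "i \<in> A - U" for i
    using that q(1) by (force simp: U_def)
  have "(\<Sum>i\<in>A. (p i - q i)\<^sup>2) = (\<Sum>i\<in>U. (p i - q i)\<^sup>2) + (\<Sum>i\<in>A - U. (p i)\<^sup>2)"
    using sum.subset_diff[OF U(1) A, of "\<lambda>i. (p i - q i)\<^sup>2"] q_off by simp
  also have "\<dots> \<le> (\<Sum>i\<in>U. 2 * (q i * (ln (q i) - ln (p i)) - q i + p i)) + (\<Sum>i\<in>A - U. 2 * p i)"
  proof (intro add_mono sum_mono)
    fix i assume "i \<in> U"
    then show "(p i - q i)\<^sup>2 \<le> 2 * (q i * (ln (q i) - ln (p i)) - q i + p i)"
      using abs_cont prob_le_one[OF A p(1,2)] prob_le_one[OF A q(1,2)]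
      by (intro sq_diff_le_kl_summand) (auto simp: U_def)
  next
    fix i assume "i \<in> A - U"
    then have "0 \<le> p i" "p i \<le> 1" using p prob_le_one[OF A p(1,2)] by auto
    then show "(p i)\<^sup>2 \<le> 2 * p i"
      using mult_right_mono[of "p i" 1 "p i"] by (simp add: power2_eq_square)
  qed
  also have "\<dots> = 2 * ((\<Sum>i\<in>U. q i * (ln (q i) - ln (p i))) - sum q U + sum p U)
                      + 2 * sum p (A - U)"
    by (simp only: sum_distrib_left[symmetric] sum.distrib sum_subtractf)
  finally have "(\<Sum>i\<in>A. (p i - q i)\<^sup>2)
      \<le> 2 * (\<Sum>i\<in>U. q i * (ln (q i) - ln (p i))) - 2 * sum q U + 2 * (sum p U + sum p (A - U))"
    by simp
  moreover have "sum p U + sum p (A - U) = 1"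
    using sum.subset_diff[OF U(1) A, of p] p(2) by simp
  moreover have "sum q U = 1"
    using sum.subset_diff[OF U(1) A, of q] q_off q(2) by simp
  ultimately show ?thesis by (simp add: U_def)
qed

lemma sum_sq_diff_le_2_expected_logloss_regret:
  fixes p q :: "nat \<Rightarrow> real"
  assumes A: "finite A"
    and p: "\<forall>i\<in>A. 0 \<le> p i" "sum p A = 1"
    and q: "\<forall>i\<in>A. 0 \<le> q i" "sum q A = 1"
  shows "ereal (\<Sum>i\<in>A. (p i - q i)\<^sup>2)
           \<le> 2 * (\<Sum>i\<in>{i\<in>A. 0 < q i}. ereal (q i) * (logloss p i - logloss q i))"
proof (cases "\<forall>i\<in>A. 0 < q i \<longrightarrow> 0 < p i")
  case True
  have "(\<Sum>i\<in>{i\<in>A. 0 < q i}. ereal (q i) * (logloss p i - logloss q i))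
          = ereal (\<Sum>i\<in>{i\<in>A. 0 < q i}. q i * (ln (q i) - ln (p i)))"
    using True by (auto simp: logloss_def intro!: sum.cong)
  then show ?thesis
    using sum_sq_diff_le_2_kl[OF A p q True] by simp
next
  case False
  then obtain i where i: "i \<in> A" "0 < q i" "\<not> 0 < p i" by blast
  then have "ereal (q i) * (logloss p i - logloss q i) = \<infinity>"
    by (simp add: logloss_def)
  with i A have "(\<Sum>i\<in>{i\<in>A. 0 < q i}. ereal (q i) * (logloss p i - logloss q i)) = \<infinity>"
    by (subst sum_Pinfty) auto
  then show ?thesis by simp
qed

lemma sq_odds_diff_le:
  fixes a b c d :: real
  assumes "b \<noteq> 0" "d \<noteq> 0"
  shows "(b * d)\<^sup>2 * (a / b - c / d)\<^sup>2 \<le> 2 * (d\<^sup>2 * (a - c)\<^sup>2 + c\<^sup>2 * (b - d)\<^sup>2)"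
proof -
  have "(b * d)\<^sup>2 * (a / b - c / d)\<^sup>2 = (d * (a - c) + c * (d - b))\<^sup>2"
    using assms by (simp add: field_simps power2_eq_square)
  also have "\<dots> \<le> 2 * (d\<^sup>2 * (a - c)\<^sup>2 + c\<^sup>2 * (b - d)\<^sup>2)"
    using sum_squares_ge_zero[of "d * (a - c) - c * (d - b)" 0]
    by (simp add: power2_eq_square algebra_simps)
  finally show ?thesis .
qed

lemma sum_sq_odds_diff_le:
  fixes p q :: "'a \<Rightarrow> real"
  assumes S: "finite S" "k \<notin> S"
    and q: "\<forall>i\<in>insert k S. 0 \<le> q i" "sum q (insert k S) = 1"
    and "p k \<noteq> 0" "q k \<noteq> 0"
  shows "(p k * q k)\<^sup>2 * (\<Sum>i\<in>S. (p i / p k - q i / q k)\<^sup>2)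
           \<le> 2 * (\<Sum>i\<in>insert k S. (p i - q i)\<^sup>2)"
proof -
  define D where "D = (\<Sum>i\<in>S. (p i - q i)\<^sup>2)"
  define E where "E = (p k - q k)\<^sup>2"
  have q_le: "q i \<le> 1" if "i \<in> insert k S" for i
    using prob_le_one[OF _ q] that S by simp
  have "(\<Sum>i\<in>S. (q i)\<^sup>2) \<le> sum q S"
    using q(1) q_le by (intro sum_mono) (simp add: power2_eq_square mult_left_le)
  also have "\<dots> \<le> 1" using q S by simp
  finally have sum_sq_q: "(\<Sum>i\<in>S. (q i)\<^sup>2) \<le> 1" .
  have "(p k * q k)\<^sup>2 * (\<Sum>i\<in>S. (p i / p k - q i / q k)\<^sup>2)
          \<le> (\<Sum>i\<in>S. 2 * ((q k)\<^sup>2 * (p i - q i)\<^sup>2 + (q i)\<^sup>2 * (p k - q k)\<^sup>2))"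
    unfolding sum_distrib_left using assms by (intro sum_mono sq_odds_diff_le) auto
  also have "\<dots> = 2 * ((q k)\<^sup>2 * D + (\<Sum>i\<in>S. (q i)\<^sup>2) * E)"
    by (simp add: D_def E_def sum_distrib_left sum_distrib_right sum.distrib algebra_simps)
  also have "\<dots> \<le> 2 * (D + E)"
  proof -
    have "(q k)\<^sup>2 \<le> 1" using q q_le by (simp add: power_le_one)
    then have "(q k)\<^sup>2 * D \<le> D" "(\<Sum>i\<in>S. (q i)\<^sup>2) * E \<le> E"
      using sum_sq_q by (auto simp: D_def E_def sum_nonneg intro!: mult_left_le_one_le)
    then show ?thesis by simp
  qed
  also have "D + E = (\<Sum>i\<in>insert k S. (p i - q i)\<^sup>2)"
    using S by (simp add: D_def E_def)
  finally show ?thesis .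
qed

lemma mnl_eq_0_outside: "i \<notin> insert 0 S \<Longrightarrow> mnl S v i = 0"
  by (simp add: mnl_def)

lemma mnl_odds:
  assumes "0 \<notin> S" "i \<in> S" "\<forall>j\<in>S. 0 \<le> v j"
  shows "mnl S v i / mnl S v 0 = v i"
proof -
  have "0 \<le> (\<Sum>j\<in>S. v j)" using assms(3) by (simp add: sum_nonneg)
  then show ?thesis using assms(1,2) by (auto simp: mnl_def)
qed

lemma mnl_nonneg: "\<forall>j\<in>S. 0 \<le> v j \<Longrightarrow> 0 \<le> mnl S v i"
  by (simp add: mnl_def sum_nonneg)

lemma sum_mnl:
  assumes "finite S" "0 \<notin> S" "\<forall>j\<in>S. 0 \<le> v j"
  shows "sum (mnl S v) (insert 0 S) = 1"
proof -
  have "0 \<le> (\<Sum>j\<in>S. v j)" using assms(3) by (simp add: sum_nonneg)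
  moreover have "sum (mnl S v) S = (\<Sum>i\<in>S. v i) / (1 + (\<Sum>j\<in>S. v j))"
    using assms(2) by (auto simp: mnl_def sum_divide_distrib intro!: sum.cong)
  ultimately show ?thesis
    using assms(1,2) by (simp add: mnl_def field_simps)
qed

lemma mnl_0_ge:
  assumes "finite S" "\<forall>j\<in>S. 0 \<le> v j \<and> v j \<le> 1"
  shows "1 / (1 + real (card S)) \<le> mnl S v 0"
proof -
  have "0 \<le> (\<Sum>j\<in>S. v j)" using assms(2) by (simp add: sum_nonneg)
  moreover have "(\<Sum>j\<in>S. v j) \<le> (\<Sum>j\<in>S. 1)" using assms(2) by (intro sum_mono) auto
  ultimately show ?thesis by (simp add: mnl_def frac_le)
qed

lemma sum_atLeast0_eq_insert_0:
  fixes f :: "nat \<Rightarrow> 'a::comm_monoid_add"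
  assumes "S \<subseteq> {1..N}" "\<forall>i\<in>{0..N} - insert 0 S. f i = 0"
  shows "sum f {0..N} = sum f (insert 0 S)"
  using assms by (intro sum.mono_neutral_right) auto

lemma sum_sq_weight_diff_le_mnl_dist:
  assumes S: "finite S" "0 \<notin> S"
    and v: "\<forall>j\<in>S. 0 \<le> v j \<and> v j \<le> 1" and w: "\<forall>j\<in>S. 0 \<le> w j \<and> w j \<le> 1"
  shows "(\<Sum>i\<in>S. (v i - w i)\<^sup>2)
           \<le> 2 * (1 + real (card S)) ^ 4 * (\<Sum>i\<in>insert 0 S. (mnl S v i - mnl S w i)\<^sup>2)"
proof -
  let ?p = "mnl S v" and ?q = "mnl S w" and ?c = "1 / (1 + real (card S))"
  have p0: "?c \<le> ?p 0" and q0: "?c \<le> ?q 0"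
    using mnl_0_ge[OF S(1)] v w by auto
  have "(1 + real (card S)) ^ 4 * (?c * ?c)\<^sup>2 = 1"
    by (simp add: power_mult_distrib power_divide flip: power_mult)
  then have "(\<Sum>i\<in>S. (v i - w i)\<^sup>2) = (1 + real (card S)) ^ 4 * ((?c * ?c)\<^sup>2 * (\<Sum>i\<in>S. (v i - w i)\<^sup>2))"
    by (simp only: mult.assoc[symmetric] mult_1)
  also have "(?c * ?c)\<^sup>2 * (\<Sum>i\<in>S. (v i - w i)\<^sup>2)
          \<le> (?p 0 * ?q 0)\<^sup>2 * (\<Sum>i\<in>S. (?p i / ?p 0 - ?q i / ?q 0)\<^sup>2)"
    using p0 q0 v w mnl_odds[OF S(2)]
    by (intro mult_mono power_mono mult_mono') (auto simp: sum_nonneg)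
  also have "\<dots> \<le> 2 * (\<Sum>i\<in>insert 0 S. (?p i - ?q i)\<^sup>2)"
    using p0 q0 w sum_mnl[OF S] mnl_nonneg
    by (intro sum_sq_odds_diff_le S) (auto intro: order_less_le_trans[rotated])
  finally show ?thesis by (simp add: mult_left_mono mult.assoc)
qed

theorem lemma3:
  fixes N K :: nat and S :: "nat set" and v vs :: "nat \<Rightarrow> real"
  assumes "1 \<le> K" and "K \<le> N"
    and "S \<subseteq> {1..N}" and "1 \<le> card S" and "card S \<le> K"
    and "\<forall>i\<in>{1..N}. 0 \<le> v i \<and> v i \<le> 1"
    and "\<forall>i\<in>{1..N}. 0 \<le> vs i \<and> vs i \<le> 1"
  shows "(1 / (2 * (real K + 1) ^ 4) * (\<Sum>i\<in>S. (v i - vs i)\<^sup>2)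
           \<le> (\<Sum>i\<in>{0..N}. (mnl S v i - mnl S vs i)\<^sup>2))
         \<and> (ereal (\<Sum>i\<in>{0..N}. (mnl S v i - mnl S vs i)\<^sup>2)
           \<le> 2 * exp_logloss_regret N S v vs)"
proof -
  let ?p = "mnl S v" and ?q = "mnl S vs"
  have S: "finite S" "0 \<notin> S" using assms(3) finite_subset by auto
  have v: "\<forall>j\<in>S. 0 \<le> v j \<and> v j \<le> 1" and vs: "\<forall>j\<in>S. 0 \<le> vs j \<and> vs j \<le> 1"
    using assms(3,6,7) by auto
  have on_support: "sum (\<lambda>i. f (?p i) (?q i)) {0..N} = sum (\<lambda>i. f (?p i) (?q i)) (insert 0 S)"
    if "f 0 0 = 0" for f :: "real \<Rightarrow> real \<Rightarrow> real"
    using assms(3) that by (intro sum_atLeast0_eq_insert_0) (auto simp: mnl_eq_0_outside)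
  let ?d = "\<Sum>i\<in>{0..N}. (?p i - ?q i)\<^sup>2"
  have "(\<Sum>i\<in>S. (v i - vs i)\<^sup>2) \<le> 2 * (1 + real (card S)) ^ 4 * ?d"
    using sum_sq_weight_diff_le_mnl_dist[OF S v vs] on_support[of "\<lambda>x y. (x - y)\<^sup>2"] by simp
  also have "\<dots> \<le> 2 * (real K + 1) ^ 4 * ?d"
    using assms(5) by (intro mult_right_mono mult_left_mono power_mono) (auto simp: sum_nonneg)
  finally have "1 / (2 * (real K + 1) ^ 4) * (\<Sum>i\<in>S. (v i - vs i)\<^sup>2) \<le> ?d"
    by (simp add: field_simps)
  moreover have "ereal ?d \<le> 2 * exp_logloss_regret N S v vs"
    unfolding exp_logloss_regret_def
    using on_support[of "\<lambda>x y. x"] on_support[of "\<lambda>x y. y"] sum_mnl[OF S] mnl_nonneg v vs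
    by (intro sum_sq_diff_le_2_expected_logloss_regret) auto
  ultimately show ?thesis ..
qed

end
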